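(* For every shrub $P$ on a finite set $I$, the rational function $f_P$ is, when written as the displayed quotient of products of linear forms, in lowest terms, without repeated factors, and a product of linear factors (i.e. after cancellation nothing cancels: the linear forms appearing in numerator and denominator are pairwise distinct).
   Context: A shrub $P$ on a finite set $I$ is a set $E$ of edges (unordered pairs of distinct elements of $I$) with a height function $h_P:I\to\mathbb{N}$; $j$ covers $i$ if $\{i,j\}\in E$ and $h_P(j)=h_P(i)+1$. Axioms: (1) edges join vertices whose heights differ by $1$; (2) every vertex of positive height covers some vertex; (3) no four distinct $a,b,c,d$ with $a$ covering $b$ and $c$, $c$ covering $d$, $\{b,d\}\notin E$; (4) no five distinct $a,b,c,d,e$ with $a$ covering $c,d$, $b$ covering $d,e$, $\{a,e\}\notin E$, $\{b,c\}\notin E$. A vertex is ramified if it covers at least two distinct vertices; two ramified vertices are equivalent if they cover the same set of vertices. $\operatorname{Ram}(P)$ is the set of equivalence classes of ramified vertices; for $r\in\operatorname{Ram}(P)$, $r^-$ is the common set of vertices covered by the elements of $r$. For $S\subseteq I$, the upper ideal $\langle S\rangle_P$ generated by $S$ is the set of $j\in I$ such that every descending path $j=j_0,j_1,\dots,j_m$ (each $j_t$ covering $j_{t+1}$) ending at a vertex of height $0$ contains an element of $S$. For $J\subseteq I$ whose complement is a shrub (for the restricted edges and height), $P\setminus J$ denotes that restricted shrub; $P\setminus\langle r\rangle_P$ is such a shrub. Write $u[S]=\sum_{k\in S}u_k$. Define $$f_P=\frac{1}{\prod_{i\in I}u[\langle\{i\}\rangle_P]}\prod_{r\in\operatorname{Ram}(P)}\frac{u[\langle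 r^-\rangle_{P\setminus\langle r\rangle_P}]}{u[\langle r^-\rangle_P]}\in\mathbb{Q}(u_i:i\in I).$$ *)

theory Defs
  imports Complex_Main
begin

text \<open>A shrub on a finite vertex set I: edge set E (unordered pairs of distinct
vertices of I, as two-element sets) and a height function h (only its values on I matter).\<close>

definition covers :: "'a set set \<Rightarrow> ('a \<Rightarrow> nat) \<Rightarrow> 'a \<Rightarrow> 'a \<Rightarrow> bool" where
  "covers E h j i \<longleftrightarrow> {i, j} \<in> E \<and> h j = h i + 1"

definition shrub :: "'a set \<Rightarrow> 'a set set \<Rightarrow> ('a \<Rightarrow> nat) \<Rightarrow> bool" where
  "shrub I E h \<longleftrightarrow>
     finite I \<and>
     (\<forall>e\<in>E. \<exists>a b. e = {a, b} \<and> a \<noteq> b \<and> a \<in> I \<and> b \<in> I) \<and>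
     (\<forall>e\<in>E. \<exists>a b. e = {a, b} \<and> h a = h b + 1) \<and>
     (\<forall>i\<in>I. 0 < h i \<longrightarrow> (\<exists>j\<in>I. covers E h i j)) \<and>
     (\<forall>a\<in>I. \<forall>b\<in>I. \<forall>c\<in>I. \<forall>d\<in>I. distinct [a, b, c, d] \<longrightarrow>
        \<not> (covers E h a b \<and> covers E h a c \<and> covers E h c d \<and> {b, d} \<notin> E)) \<and>
     (\<forall>a\<in>I. \<forall>b\<in>I. \<forall>c\<in>I. \<forall>d\<in>I. \<forall>e\<in>I. distinct [a, b, c, d, e] \<longrightarrow>
        \<not> (covers E h a c \<and> covers E h a d \<and> covers E h b d \<and> covers E h b e \<and>
            {a, e} \<notin> E \<and> {b, c} \<notin> E))"

definition down :: "'a set \<Rightarrow> 'a set set \<Rightarrow> ('a \<Rightarrow> nat) \<Rightarrow> 'a \<Rightarrow> 'a set" where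
  "down I E h v = {w \<in> I. covers E h v w}"

definition ramified :: "'a set \<Rightarrow> 'a set set \<Rightarrow> ('a \<Rightarrow> nat) \<Rightarrow> 'a \<Rightarrow> bool" where
  "ramified I E h v \<longleftrightarrow> v \<in> I \<and> (\<exists>x y. x \<noteq> y \<and> x \<in> down I E h v \<and> y \<in> down I E h v)"

definition Ram :: "'a set \<Rightarrow> 'a set set \<Rightarrow> ('a \<Rightarrow> nat) \<Rightarrow> 'a set set" where
  "Ram I E h = {{w. ramified I E h w \<and> down I E h w = down I E h v} | v. ramified I E h v}"

definition rminus :: "'a set \<Rightarrow> 'a set set \<Rightarrow> ('a \<Rightarrow> nat) \<Rightarrow> 'a set \<Rightarrow> 'a set" where
  "rminus I E h r = (THE S. \<forall>v\<in>r. down I E h v = S)"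

definition desc_path :: "'a set \<Rightarrow> 'a set set \<Rightarrow> ('a \<Rightarrow> nat) \<Rightarrow> 'a \<Rightarrow> 'a list \<Rightarrow> bool" where
  "desc_path I E h j xs \<longleftrightarrow> xs \<noteq> [] \<and> hd xs = j \<and> set xs \<subseteq> I \<and>
     (\<forall>t. Suc t < length xs \<longrightarrow> covers E h (xs ! t) (xs ! Suc t)) \<and> h (last xs) = 0"

definition upideal :: "'a set \<Rightarrow> 'a set set \<Rightarrow> ('a \<Rightarrow> nat) \<Rightarrow> 'a set \<Rightarrow> 'a set" where
  "upideal I E h S = {j \<in> I. \<forall>xs. desc_path I E h j xs \<longrightarrow> set xs \<inter> S \<noteq> {}}"

definition restr_edges :: "'a set set \<Rightarrow> 'a set \<Rightarrow> 'a set set" where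
  "restr_edges E K = {e \<in> E. e \<subseteq> K}"

text \<open>The linear form u[S] = sum of u_k over k in S, represented by its coefficient vector.\<close>
definition linform :: "'a set \<Rightarrow> ('a \<Rightarrow> rat)" where
  "linform S = (\<lambda>k. if k \<in> S then 1 else 0)"

text \<open>The factors of the displayed expression for f_P, indexed by
  Inl i (denominator u[<{i}>_P]), Inr (Inl r) (denominator u[<r^->_P]),
  Inr (Inr r) (numerator u[<r^->_{P \ <r>_P}]).\<close>
definition factor_set :: "'a set \<Rightarrow> 'a set set \<Rightarrow> ('a \<Rightarrow> nat) \<Rightarrow> 'a + 'a set + 'a set \<Rightarrow> 'a set" where
  "factor_set I E h x = (case x of
      Inl i \<Rightarrow> upideal I E h {i}
    | Inr (Inl r) \<Rightarrow> upideal I E h (rminus I E h r)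
    | Inr (Inr r) \<Rightarrow>
        (let K = I - upideal I E h r in upideal K (restr_edges E K) h (rminus I E h r)))"

definition factor_index :: "'a set \<Rightarrow> 'a set set \<Rightarrow> ('a \<Rightarrow> nat) \<Rightarrow> ('a + 'a set + 'a set) set" where
  "factor_index I E h = Inl ` I \<union> Inr ` Inl ` Ram I E h \<union> Inr ` Inr ` Ram I E h"

end

theory Submission
  imports Defs
begin

text \<open>Every factor of f_P is u[U] for an upper ideal U generated by a nonempty set of vertices
of one common height c, taken in a graph in which every vertex has a descending path to height 0
(P itself, or P without the upper ideal of some r). In such a graph the generators are exactly
the elements of U of height at most c, so U determines its generator. The generators {i} and r^-
differ since r^- has two elements, and r^- determines r. Finally, for the same r the denominator
u[<r^->_P] and the numerator u[<r^->_{P \ <r>_P}] differ: the former contains r, the latter avoids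
<r>_P.\<close>

definition grounded :: "'a set \<Rightarrow> 'a set set \<Rightarrow> ('a \<Rightarrow> nat) \<Rightarrow> bool" where
  "grounded K E h \<longleftrightarrow> (\<forall>j\<in>K. \<exists>xs. desc_path K E h j xs)"

definition factor_generator ::
  "'a set \<Rightarrow> 'a set set \<Rightarrow> ('a \<Rightarrow> nat) \<Rightarrow> 'a + 'a set + 'a set \<Rightarrow> 'a set" where
  "factor_generator I E h x = (case x of
      Inl i \<Rightarrow> {i}
    | Inr (Inl r) \<Rightarrow> rminus I E h r
    | Inr (Inr r) \<Rightarrow> rminus I E h r)"

lemma desc_path_nth_height:
  assumes "desc_path K E h j xs" "t < length xs"
  shows "h (xs ! t) + t = h j"
  using assms(2)
proof (induction t)
  case 0
  then show ?case using assms(1) by (auto simp: desc_path_def hd_conv_nth)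
next
  case (Suc t)
  then have "covers E h (xs ! t) (xs ! Suc t)" using assms(1) by (auto simp: desc_path_def)
  then show ?case using Suc by (auto simp: covers_def)
qed

lemma desc_path_drop:
  assumes "desc_path K E h j xs" "t < length xs"
  shows "desc_path K E h (xs ! t) (drop t xs)"
  using assms by (auto simp: desc_path_def hd_drop_conv_nth dest: in_set_dropD)

lemma desc_path_restr_edges:
  assumes "desc_path I E h j xs" "set xs \<subseteq> K"
  shows "desc_path K (restr_edges E K) h j xs"
  using assms unfolding desc_path_def restr_edges_def covers_def
  by (metis (no_types, lifting) Suc_lessD empty_subsetI insert_subset mem_Collect_eq nth_mem
      subset_trans)

lemma desc_path_Cons:
  assumes "desc_path I E h k ys" "j \<in> I" "covers E h j k"
  shows "desc_path I E h j (j # ys)"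
proof -
  have "ys \<noteq> []" "ys ! 0 = k" using assms(1) by (auto simp: desc_path_def hd_conv_nth)
  then show ?thesis
    using assms unfolding desc_path_def by (auto simp: nth_Cons split: nat.split)
qed

lemma grounded_if_covers_below:
  assumes "\<forall>i\<in>I. 0 < h i \<longrightarrow> (\<exists>j\<in>I. covers E h i j)"
  shows "grounded I E h"
  unfolding grounded_def
proof
  show "\<exists>xs. desc_path I E h j xs" if "j \<in> I" for j
    using that
  proof (induction "h j" arbitrary: j)
    case 0
    then show ?case by (intro exI[of _ "[j]"]) (auto simp: desc_path_def)
  next
    case (Suc n)
    then obtain k where k: "k \<in> I" "covers E h j k" using assms by fastforce
    then have "h k = n" using Suc by (auto simp: covers_def)
    then obtain ys where "desc_path I E h k ys" using Suc k by auto
    then show ?case using desc_path_Cons[OF _ Suc.prems k(2)] by blast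
  qed
qed

lemma shrub_grounded: "shrub I E h \<Longrightarrow> grounded I E h"
  unfolding shrub_def by (intro grounded_if_covers_below) (elim conjE)

lemma subset_upideal: "S \<subseteq> K \<Longrightarrow> S \<subseteq> upideal K E h S"
  by (auto simp: upideal_def desc_path_def dest: hd_in_set)

lemma upideal_generator_below:
  assumes "grounded K E h" "j \<in> upideal K E h S"
  obtains s where "s \<in> S" "h s \<le> h j" "h s = h j \<Longrightarrow> s = j"
proof -
  obtain xs where xs: "desc_path K E h j xs"
    using assms by (auto simp: grounded_def upideal_def)
  then have "set xs \<inter> S \<noteq> {}" using assms(2) by (auto simp: upideal_def)
  then obtain t where t: "t < length xs" "xs ! t \<in> S" by (metis disjoint_iff in_set_conv_nth)
  have "h (xs ! t) + t = h j" by (rule desc_path_nth_height[OF xs t(1)])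
  moreover have "xs ! 0 = j" using xs by (auto simp: desc_path_def hd_conv_nth)
  ultimately show thesis using t by (intro that[of "xs ! t"]) auto
qed

lemma upideal_height_ge:
  assumes "grounded K E h" "\<forall>s\<in>S. h s = c" "j \<in> upideal K E h S"
  shows "c \<le> h j"
  using assms by (metis upideal_generator_below)

lemma upideal_low_part:
  assumes "grounded K E h" "S \<subseteq> K" "\<forall>s\<in>S. h s = c"
  shows "{j \<in> upideal K E h S. h j \<le> c} = S"
proof
  show "{j \<in> upideal K E h S. h j \<le> c} \<subseteq> S"
  proof
    fix j assume j: "j \<in> {j \<in> upideal K E h S. h j \<le> c}"
    then obtain s where s: "s \<in> S" "h s \<le> h j" "h s = h j \<Longrightarrow> s = j"
      using upideal_generator_below[OF assms(1)] by blast
    then have "h s = h j" using j assms(3) by simp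
    then show "j \<in> S" using s by simp
  qed
  show "S \<subseteq> {j \<in> upideal K E h S. h j \<le> c}"
    using subset_upideal[OF assms(2)] assms(3) by auto
qed

lemma upideal_determines_generator:
  assumes "grounded K1 E1 h" "S1 \<subseteq> K1" "\<forall>s\<in>S1. h s = c1" "S1 \<noteq> {}"
    and "grounded K2 E2 h" "S2 \<subseteq> K2" "\<forall>s\<in>S2. h s = c2" "S2 \<noteq> {}"
    and eq: "upideal K1 E1 h S1 = upideal K2 E2 h S2"
  shows "S1 = S2"
proof -
  obtain s1 s2 where s: "s1 \<in> S1" "s2 \<in> S2" using assms(4,8) by blast
  have "c2 \<le> c1"
    using upideal_height_ge[OF assms(5,7)] subset_upideal[OF assms(2)] s(1) assms(3) eq by force
  moreover have "c1 \<le> c2"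
    using upideal_height_ge[OF assms(1,3)] subset_upideal[OF assms(6)] s(2) assms(7) eq by force
  ultimately have "c1 = c2" by simp
  have "S1 = {j \<in> upideal K1 E1 h S1. h j \<le> c1}" using upideal_low_part[OF assms(1-3)] by simp
  also have "\<dots> = {j \<in> upideal K2 E2 h S2. h j \<le> c2}" using eq \<open>c1 = c2\<close> by simp
  also have "\<dots> = S2" using upideal_low_part[OF assms(5-7)] .
  finally show ?thesis .
qed

lemma grounded_Diff_upideal:
  assumes "grounded I E h"
  shows "grounded (I - upideal I E h R) (restr_edges E (I - upideal I E h R)) h"
  unfolding grounded_def
proof
  fix j assume j: "j \<in> I - upideal I E h R"
  then obtain xs where xs: "desc_path I E h j xs" "set xs \<inter> R = {}"
    by (auto simp: upideal_def)
  have "set xs \<subseteq> I - upideal I E h R"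
  proof
    fix x assume x: "x \<in> set xs"
    then obtain t where t: "t < length xs" "x = xs ! t" by (auto simp: in_set_conv_nth)
    have "desc_path I E h x (drop t xs)" using desc_path_drop[OF xs(1) t(1)] t(2) by simp
    moreover have "set (drop t xs) \<inter> R = {}" using xs(2) by (auto dest: in_set_dropD)
    moreover have "x \<in> I" using xs(1) x by (auto simp: desc_path_def)
    ultimately show "x \<in> I - upideal I E h R" by (auto simp: upideal_def)
  qed
  then show "\<exists>xs. desc_path (I - upideal I E h R) (restr_edges E (I - upideal I E h R)) h j xs"
    using desc_path_restr_edges[OF xs(1)] by blast
qed

lemma rminus_class:
  assumes "ramified I E h v"
  shows "rminus I E h {w. ramified I E h w \<and> down I E h w = down I E h v} = down I E h v"
  unfolding rminus_def
proof (rule the_equality)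
  fix S assume "\<forall>u\<in>{w. ramified I E h w \<and> down I E h w = down I E h v}. down I E h u = S"
  then show "S = down I E h v" using assms by blast
qed simp

lemma RamE:
  assumes "r \<in> Ram I E h"
  obtains v where "ramified I E h v" "r = {w. ramified I E h w \<and> down I E h w = down I E h v}"
    "rminus I E h r = down I E h v"
proof -
  obtain v where v: "ramified I E h v" "r = {w. ramified I E h w \<and> down I E h w = down I E h v}"
    using assms unfolding Ram_def by blast
  then show thesis using that[OF v] rminus_class[OF v(1)] by simp
qed

lemma down_height: "w \<in> down I E h v \<Longrightarrow> h w + 1 = h v"
  by (simp add: down_def covers_def)

lemma Ram_subset: "r \<in> Ram I E h \<Longrightarrow> r \<subseteq> I"
  by (elim RamE) (auto simp: ramified_def)

lemma Ram_nonempty: "r \<in> Ram I E h \<Longrightarrow> r \<noteq> {}"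
  by (elim RamE) auto

lemma rminus_subset: "r \<in> Ram I E h \<Longrightarrow> rminus I E h r \<subseteq> I"
  by (elim RamE) (auto simp: down_def)

lemma rminus_not_singleton: "r \<in> Ram I E h \<Longrightarrow> rminus I E h r \<noteq> {i}"
  by (elim RamE) (auto simp: ramified_def)

lemma rminus_nonempty: "r \<in> Ram I E h \<Longrightarrow> rminus I E h r \<noteq> {}"
  by (elim RamE) (auto simp: ramified_def)

lemma rminus_uniform_height:
  assumes "r \<in> Ram I E h"
  obtains c where "\<forall>s\<in>rminus I E h r. h s = c"
proof -
  obtain v where "rminus I E h r = down I E h v" using assms by (elim RamE)
  then show thesis by (intro that[of "h v - 1"]) (auto dest: down_height)
qed

lemma Ram_eq_if_rminus_eq:
  "r \<in> Ram I E h \<Longrightarrow> r' \<in> Ram I E h \<Longrightarrow> rminus I E h r = rminus I E h r' \<Longrightarrow> r = r'"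
  by (elim RamE) simp

lemma Ram_subset_upideal_rminus:
  assumes "r \<in> Ram I E h"
  shows "r \<subseteq> upideal I E h (rminus I E h r)"
proof
  fix u assume u: "u \<in> r"
  have down_u: "down I E h u = rminus I E h r" and "ramified I E h u"
    using assms u by (elim RamE; simp)+
  then obtain w where uI: "u \<in> I" and "w \<in> down I E h u" by (auto simp: ramified_def)
  then have pos: "0 < h u" by (auto dest: down_height)
  have "set xs \<inter> rminus I E h r \<noteq> {}" if p: "desc_path I E h u xs" for xs
  proof -
    \<comment> \<open>u has positive height, so the path has a second vertex, which u covers\<close>
    have "Suc 0 < length xs"
      using p pos by (cases xs; cases "tl xs") (auto simp: desc_path_def)
    moreover have "xs ! 0 = u" using p by (auto simp: desc_path_def hd_conv_nth)
    ultimately have "covers E h u (xs ! Suc 0)" "xs ! Suc 0 \<in> set xs"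
      using p unfolding desc_path_def by auto
    then have "xs ! Suc 0 \<in> down I E h u" "xs ! Suc 0 \<in> set xs"
      using p by (auto simp: desc_path_def down_def)
    then show ?thesis using down_u by auto
  qed
  then show "u \<in> upideal I E h (rminus I E h r)" using uI by (auto simp: upideal_def)
qed

lemma rminus_disjoint_upideal:
  assumes "grounded I E h" "r \<in> Ram I E h"
  shows "rminus I E h r \<inter> upideal I E h r = {}"
proof (rule ccontr)
  assume "\<not> ?thesis"
  then obtain w where w: "w \<in> rminus I E h r" "w \<in> upideal I E h r" by blast
  then obtain u where u: "u \<in> r" "h u \<le> h w"
    using upideal_generator_below[OF assms(1)] by blast
  have "w \<in> down I E h u" using assms(2) u(1) w(1) by (elim RamE) simp
  then have "h w + 1 = h u" by (rule down_height)
  with u(2) show False by simp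
qed

lemma factor_set_upideal_generator:
  assumes "grounded I E h" "x \<in> factor_index I E h"
  obtains K E' c where "grounded K E' h" "factor_generator I E h x \<subseteq> K"
    "\<forall>s\<in>factor_generator I E h x. h s = c" "factor_generator I E h x \<noteq> {}"
    "factor_set I E h x = upideal K E' h (factor_generator I E h x)"
proof -
  consider (vertex) i where "x = Inl i" "i \<in> I"
    | (denominator) r where "x = Inr (Inl r)" "r \<in> Ram I E h"
    | (numerator) r where "x = Inr (Inr r)" "r \<in> Ram I E h"
    using assms(2) unfolding factor_index_def by blast
  then show thesis
  proof cases
    case vertex
    then show thesis using assms(1)
      by (intro that[of I E "h i"]) (simp_all add: factor_generator_def factor_set_def)
  next
    case denominator
    then obtain c where "\<forall>s\<in>rminus I E h r. h s = c" by (elim rminus_uniform_height)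
    then show thesis using assms(1) denominator rminus_subset rminus_nonempty
      by (intro that[of I E c]) (simp_all add: factor_generator_def factor_set_def)
  next
    case numerator
    then obtain c where "\<forall>s\<in>rminus I E h r. h s = c" by (elim rminus_uniform_height)
    moreover define K where "K = I - upideal I E h r"
    moreover have "grounded K (restr_edges E K) h"
      unfolding K_def by (rule grounded_Diff_upideal[OF assms(1)])
    moreover have "rminus I E h r \<subseteq> K"
      using rminus_disjoint_upideal[OF assms(1) numerator(2)] rminus_subset[OF numerator(2)]
      unfolding K_def by blast
    ultimately show thesis using numerator rminus_nonempty
      by (intro that[of K "restr_edges E K" c])
        (simp_all add: factor_generator_def factor_set_def Let_def)
  qed
qed

lemma factor_set_nonempty:
  assumes "grounded I E h" "x \<in> factor_index I E h"
  shows "factor_set I E h x \<noteq> {}"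
proof -
  obtain K E' and c :: nat where "factor_generator I E h x \<subseteq> K" "factor_generator I E h x \<noteq> {}"
    "factor_set I E h x = upideal K E' h (factor_generator I E h x)"
    using assms by (rule factor_set_upideal_generator)
  then show ?thesis using subset_upideal[of "factor_generator I E h x" K E' h] by auto
qed

lemma factor_generator_eq_if_factor_set_eq:
  assumes "grounded I E h" "x \<in> factor_index I E h" "y \<in> factor_index I E h"
    and "factor_set I E h x = factor_set I E h y"
  shows "factor_generator I E h x = factor_generator I E h y"
proof -
  obtain K1 E1 c1 where x: "grounded K1 E1 h" "factor_generator I E h x \<subseteq> K1"
    "\<forall>s\<in>factor_generator I E h x. h s = c1" "factor_generator I E h x \<noteq> {}"
    and fx: "factor_set I E h x = upideal K1 E1 h (factor_generator I E h x)"
    using assms(1,2) by (rule factor_set_upideal_generator)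
  obtain K2 E2 c2 where y: "grounded K2 E2 h" "factor_generator I E h y \<subseteq> K2"
    "\<forall>s\<in>factor_generator I E h y. h s = c2" "factor_generator I E h y \<noteq> {}"
    and fy: "factor_set I E h y = upideal K2 E2 h (factor_generator I E h y)"
    using assms(1,3) by (rule factor_set_upideal_generator)
  show ?thesis using upideal_determines_generator[OF x y] fx fy assms(4) by simp
qed

lemma denominator_ne_numerator:
  assumes "r \<in> Ram I E h"
  shows "factor_set I E h (Inr (Inl r)) \<noteq> factor_set I E h (Inr (Inr r))"
proof -
  obtain v where v: "v \<in> r" using Ram_nonempty[OF assms] by blast
  then have "v \<in> factor_set I E h (Inr (Inl r))"
    using Ram_subset_upideal_rminus[OF assms] by (auto simp: factor_set_def)
  moreover have "v \<in> upideal I E h r" using subset_upideal[OF Ram_subset[OF assms]] v by blast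
  then have "v \<notin> factor_set I E h (Inr (Inr r))"
    by (auto simp: factor_set_def Let_def upideal_def)
  ultimately show ?thesis by blast
qed

lemma inj_on_factor_set:
  assumes "grounded I E h"
  shows "inj_on (factor_set I E h) (factor_index I E h)"
proof
  fix x y assume x: "x \<in> factor_index I E h" and y: "y \<in> factor_index I E h"
    and eq: "factor_set I E h x = factor_set I E h y"
  have "factor_generator I E h x = factor_generator I E h y"
    using factor_generator_eq_if_factor_set_eq[OF assms x y eq] .
  then show "x = y"
    using x y eq denominator_ne_numerator[of _ I E h] denominator_ne_numerator[of _ I E h, THEN not_sym]
      rminus_not_singleton[of _ I E h] rminus_not_singleton[of _ I E h, THEN not_sym]
    by (auto simp: factor_index_def factor_generator_def dest: Ram_eq_if_rminus_eq)
qed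

lemma linform_eq_iff: "linform A = linform B \<longleftrightarrow> A = B"
  by (auto simp: linform_def fun_eq_iff split: if_splits)

lemma linform_eq_zero_iff: "linform A = (\<lambda>_. 0) \<longleftrightarrow> A = {}"
  by (auto simp: linform_def fun_eq_iff split: if_splits)

theorem mainTheorem11:
  fixes I :: "'a set" and E :: "'a set set" and h :: "'a \<Rightarrow> nat"
  assumes "shrub I E h"
  shows "(\<forall>x\<in>factor_index I E h. linform (factor_set I E h x) \<noteq> (\<lambda>_. 0))
       \<and> inj_on (\<lambda>x. linform (factor_set I E h x)) (factor_index I E h)"
proof
  have grounded: "grounded I E h" using assms by (rule shrub_grounded)
  show "\<forall>x\<in>factor_index I E h. linform (factor_set I E h x) \<noteq> (\<lambda>_. 0)"
    using factor_set_nonempty[OF grounded] by (simp add: linform_eq_zero_iff)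
  show "inj_on (\<lambda>x. linform (factor_set I E h x)) (factor_index I E h)"
    using inj_on_factor_set[OF grounded] by (simp add: inj_on_def linform_eq_iff)
qed

end
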